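(* There exists no binary orthogonal array of parameters $(n,M,\tau)=(9,96,4)$, i.e. of length $9$, cardinality $96=6\cdot 2^4$ and strength $4$.
   Context: A binary orthogonal array of parameters $(n,M,\tau)$ is the multiset of rows of an $M\times n$ binary matrix such that every $M\times\tau$ submatrix contains each ordered $\tau$-tuple of $\{0,1\}^\tau$ exactly $M/2^\tau$ times as rows. *)

theory Defs
  imports Main "HOL-Library.Multiset"
begin

text \<open>A binary orthogonal array with parameters (n, M, tau): a multiset of M rows,
each a binary word (bool list) of length n, such that for every choice of tau
distinct columns (listed increasingly), every binary tau-tuple occurs as the
restriction of exactly M / 2^tau rows (stated multiplicatively, which also
encodes that 2^tau divides M).\<close>

definition restrict_cols :: "nat list \<Rightarrow> bool list \<Rightarrow> bool list" where
  "restrict_cols cols r = map (\<lambda>i. r ! i) cols"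

definition binary_OA :: "nat \<Rightarrow> nat \<Rightarrow> nat \<Rightarrow> bool list multiset \<Rightarrow> bool" where
  "binary_OA n M \<tau> A \<longleftrightarrow>
     (\<forall>r \<in># A. length r = n) \<and> size A = M \<and>
     (\<forall>cols. length cols = \<tau> \<and> sorted_wrt (<) cols \<and> set cols \<subseteq> {..<n} \<longrightarrow>
        (\<forall>t. length t = \<tau> \<longrightarrow>
           count (image_mset (restrict_cols cols) A) t * 2 ^ \<tau> = M))"

end

theory Submission
  imports Defs
begin

text \<open>Write \<open>\<chi>\<^sub>X(r) = (-1)^(\<Sum>i\<in>X. r\<^sub>i)\<close> and \<open>F(X) = \<Sum>r\<in>A. \<chi>\<^sub>X(r)\<close>. Strength 4 fixes, for
  \<open>k \<le> 4\<close>, the sum over the rows of \<open>C(a, k)\<close>, where \<open>a\<close> counts the positions of \<open>X\<close> on which a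
  row agrees with a fixed pattern. So any function of \<open>a\<close> that is congruent modulo a power of 2
  to, or bounded above by, a combination of the \<open>2\<^sup>k C(a, k)\<close> with \<open>k \<le> 4\<close> can be summed over the
  array. For a \<open>(9, 96, 4)\<close> array and \<open>U = {0..8}\<close> this gives: 32 divides every \<open>F(X)\<close>, by
  expanding \<open>(-1)^a = (1 - 2)^a\<close>; \<open>F(U-{j}) + \<Sum>\<^sub>l F(U-{j,l}) \<equiv> 32 (mod 64)\<close> for every \<open>j\<close>, so
  some coefficient of this family is non-zero; and summing a Delsarte-type inequality over pairs
  of rows, \<open>2 \<Sum>\<^sub>j F(U-{j})\<^sup>2 + \<Sum>\<^sub>j\<^sub>\<noteq>\<^sub>l F(U-{j,l})\<^sup>2 \<le> 6144\<close>. The first two facts force the left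
  side to be at least \<open>9 \<cdot> 32\<^sup>2 = 9216\<close>.\<close>

definition agree :: "nat set \<Rightarrow> (nat \<Rightarrow> bool) \<Rightarrow> bool list \<Rightarrow> nat" where
  "agree X p r = card {i \<in> X. r ! i = p i}"

definition chi :: "nat set \<Rightarrow> bool list \<Rightarrow> int" where
  "chi X r = (\<Prod>i\<in>X. if r ! i then -1 else 1)"

definition hamming :: "nat set \<Rightarrow> bool list \<Rightarrow> bool list \<Rightarrow> nat" where
  "hamming U x y = agree U (\<lambda>i. \<not> x ! i) y"

definition fourier_coeff :: "bool list multiset \<Rightarrow> nat set \<Rightarrow> int" where
  "fourier_coeff A X = (\<Sum>r\<in>#A. chi X r)"

lemma agree_le_card: "finite X \<Longrightarrow> agree X p r \<le> card X"
  unfolding agree_def by (rule card_mono) auto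

lemma count_image_mset_eq_size_filter:
  "count (image_mset f A) t = size (filter_mset (\<lambda>r. f r = t) A)"
  by (induction A) auto

lemma sum_mset_indicator: "(\<Sum>x\<in>#A. if P x then 1 else 0) = size (filter_mset P A)"
  by (induction A) auto

lemma sum_mset_sum_swap: "(\<Sum>x\<in>#A. \<Sum>i\<in>S. g x i) = (\<Sum>i\<in>S. \<Sum>x\<in>#A. g x i)"
  by (induction A) (auto simp: sum.distrib)

lemma sum_mset_diff:
  "(\<Sum>x\<in>#A. f x - g x) = (\<Sum>x\<in>#A. f x) - (\<Sum>x\<in>#A. (g x :: 'b::ab_group_add))"
  by (induction A) auto

lemma dvd_sum_mset:
  "(\<And>x. x \<in># A \<Longrightarrow> (m::'b::comm_semiring_1) dvd f x) \<Longrightarrow> m dvd (\<Sum>x\<in>#A. f x)"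
  by (induction A) auto

lemma member_le_sum_mset:
  assumes "x \<in># A" and "\<And>y. y \<in># A \<Longrightarrow> 0 \<le> (f y :: 'b::ordered_comm_monoid_add)"
  shows "f x \<le> (\<Sum>y\<in>#A. f y)"
proof -
  have "(\<Sum>y\<in>#A. f y) = f x + (\<Sum>y\<in>#A - {#x#}. f y)"
    using assms(1) by (metis insert_DiffM sum_mset.insert image_mset_add_mset)
  moreover have "0 \<le> (\<Sum>y\<in>#A - {#x#}. f y)"
    using sum_mset_mono[of "A - {#x#}" "\<lambda>_. 0" f] assms(2) by (auto dest: in_diffD)
  ultimately show ?thesis by (simp add: add_increasing2)
qed

lemma prod_sign_eq_power:
  "finite X \<Longrightarrow> (\<Prod>i\<in>X. if P i then -1 else 1 :: int) = (-1) ^ card {i \<in> X. P i}"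
  by (simp add: prod.If_cases Collect_conj_eq Int_commute)

lemma sum_sign_eq:
  assumes "finite X"
  shows "(\<Sum>i\<in>X. if P i then -1 else 1 :: int) = int (card X) - 2 * int (card {i \<in> X. P i})"
proof -
  have "card X = card {i \<in> X. P i} + card {i \<in> X. \<not> P i}"
    using assms by (subst card_Un_disjoint[symmetric]) (auto intro: arg_cong[where f = card])
  then show ?thesis
    using assms by (simp add: sum.If_cases Collect_conj_eq Collect_neg_eq Int_commute)
qed


section \<open>Orthogonal arrays fix the low binomial moments\<close>

lemma binary_OA_count_pattern:
  assumes oa: "binary_OA n M \<tau> A" and T: "T \<subseteq> {..<n}" "card T = \<tau>"
  shows "size (filter_mset (\<lambda>r. \<forall>i\<in>T. r ! i = p i) A) * 2 ^ \<tau> = M"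
proof -
  have "finite T" using T(1) finite_subset by blast
  then obtain cols where cols: "sorted_wrt (<) cols" "set cols = T"
    using ex1_sorted_list_for_set_if_finite by blast
  then have "length cols = \<tau>"
    using T(2) by (metis distinct_card strict_sorted_iff)
  then have "count (image_mset (restrict_cols cols) A) (map p cols) * 2 ^ \<tau> = M"
    using oa cols T(1) unfolding binary_OA_def by auto
  moreover have "(\<lambda>r. restrict_cols cols r = map p cols) = (\<lambda>r. \<forall>i\<in>T. r ! i = p i)"
    using cols(2) by (auto simp: restrict_cols_def fun_eq_iff map_eq_conv)
  ultimately show ?thesis by (simp add: count_image_mset_eq_size_filter)
qed

lemma binary_OA_count_pattern_le:
  assumes oa: "binary_OA n M \<tau> A" and "\<tau> \<le> n"
  shows "T \<subseteq> {..<n} \<Longrightarrow> card T \<le> \<tau> \<Longrightarrow>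
    size (filter_mset (\<lambda>r. \<forall>i\<in>T. r ! i = p i) A) * 2 ^ card T = M"
proof (induction "\<tau> - card T" arbitrary: T p)
  case 0
  then show ?case using binary_OA_count_pattern[OF oa, of T p] by simp
next
  case (Suc d)
  have "finite T" using Suc.prems(1) finite_subset by blast
  have "T \<noteq> {..<n}" using Suc.hyps(2) \<open>\<tau> \<le> n\<close> by auto
  then obtain j where j: "j < n" "j \<notin> T" using Suc.prems(1) by auto
  let ?T = "insert j T" and ?q = "p(j := \<not> p j)"
  have T: "d = \<tau> - card ?T" "?T \<subseteq> {..<n}" "card ?T \<le> \<tau>" and card_T: "card ?T = Suc (card T)"
    using Suc \<open>finite T\<close> j by auto
  have "filter_mset (\<lambda>r. \<forall>i\<in>T. r ! i = p i) A =
      filter_mset (\<lambda>r. \<forall>i\<in>?T. r ! i = p i) A + filter_mset (\<lambda>r. \<forall>i\<in>?T. r ! i = ?q i) A"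
    by (rule multiset_eqI) (use j in \<open>auto simp: count_filter_mset\<close>)
  then show ?case
    using Suc.hyps(1)[OF T, of p] Suc.hyps(1)[OF T, of ?q] card_T by (simp add: algebra_simps)
qed

lemma binary_OA_binomial_moment:
  assumes oa: "binary_OA n M \<tau> A" and "\<tau> \<le> n" and X: "X \<subseteq> {..<n}" and "k \<le> \<tau>"
  shows "(\<Sum>r\<in>#A. agree X p r choose k) * 2 ^ k = (card X choose k) * M"
proof -
  have "finite X" using X finite_subset by blast
  define S where "S = {T. T \<subseteq> X \<and> card T = k}"
  have "finite S" unfolding S_def using \<open>finite X\<close> by (auto intro: finite_subset[of _ "Pow X"])
  have choose_eq: "agree X p r choose k = (\<Sum>T\<in>S. if \<forall>i\<in>T. r ! i = p i then 1 else 0)" for r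
  proof -
    have "agree X p r choose k = card {T. T \<subseteq> {i \<in> X. r ! i = p i} \<and> card T = k}"
      unfolding agree_def using \<open>finite X\<close> by (simp add: n_subsets)
    also have "{T. T \<subseteq> {i \<in> X. r ! i = p i} \<and> card T = k} = {T \<in> S. \<forall>i\<in>T. r ! i = p i}"
      unfolding S_def by auto
    finally show ?thesis using \<open>finite S\<close> by (simp add: sum.inter_filter[symmetric])
  qed
  have "(\<Sum>r\<in>#A. agree X p r choose k) * 2 ^ k
      = (\<Sum>T\<in>S. size (filter_mset (\<lambda>r. \<forall>i\<in>T. r ! i = p i) A) * 2 ^ k)"
    by (simp add: choose_eq sum_mset_sum_swap sum_mset_indicator sum_distrib_right)
  also have "\<dots> = (\<Sum>T\<in>S. M)"
    using binary_OA_count_pattern_le[OF oa \<open>\<tau> \<le> n\<close>] X \<open>k \<le> \<tau>\<close>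
    by (intro sum.cong) (auto simp: S_def)
  also have "\<dots> = (card X choose k) * M"
    unfolding S_def using \<open>finite X\<close> by (simp add: n_subsets)
  finally show ?thesis .
qed

lemma binary_OA_moment_combination:
  assumes oa: "binary_OA n M \<tau> A" "\<tau> \<le> n" and X: "X \<subseteq> {..<n}"
  shows "(\<Sum>r\<in>#A. \<Sum>k\<le>\<tau>. c k * 2 ^ k * int (agree X p r choose k))
       = int M * (\<Sum>k\<le>\<tau>. c k * int (card X choose k))"
proof -
  have "(\<Sum>r\<in>#A. c k * 2 ^ k * int (agree X p r choose k)) = int M * (c k * int (card X choose k))"
    if "k \<le> \<tau>" for k
  proof -
    have "int ((\<Sum>r\<in>#A. agree X p r choose k) * 2 ^ k) = int ((card X choose k) * M)"
      using binary_OA_binomial_moment[OF oa X that] by simp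
    then have "(\<Sum>r\<in>#A. int (agree X p r choose k)) * 2 ^ k = int (card X choose k) * int M"
      by (simp add: of_nat_sum_mset multiset.map_comp comp_def)
    then show ?thesis
      by (simp add: sum_mset_distrib_left[symmetric] algebra_simps)
  qed
  then show ?thesis
    by (simp add: sum_mset_sum_swap sum_distrib_left)
qed

lemma binary_OA_moment_congruence:
  assumes oa: "binary_OA n M \<tau> A" "\<tau> \<le> n" and X: "X \<subseteq> {..<n}"
    and h: "\<And>z. z \<le> card X \<Longrightarrow> m dvd h z - (\<Sum>k\<le>\<tau>. c k * 2 ^ k * int (z choose k))"
  shows "m dvd (\<Sum>r\<in>#A. h (agree X p r)) - int M * (\<Sum>k\<le>\<tau>. c k * int (card X choose k))"
proof -
  have "finite X" using X finite_subset by blast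
  then have "m dvd (\<Sum>r\<in>#A. h (agree X p r) - (\<Sum>k\<le>\<tau>. c k * 2 ^ k * int (agree X p r choose k)))"
    by (intro dvd_sum_mset h agree_le_card)
  then show ?thesis
    by (simp only: sum_mset_diff binary_OA_moment_combination[OF oa X])
qed


section \<open>Divisibility of the Fourier coefficients\<close>

lemma neg_one_power_binomial_congruence:
  "2 ^ Suc t dvd (-1::int) ^ z - (\<Sum>k\<le>t. (-1) ^ k * 2 ^ k * int (z choose k))"
proof -
  let ?f = "\<lambda>k. (-1) ^ k * 2 ^ k * int (z choose k) :: int"
  have "(-1::int) ^ z = (\<Sum>k\<le>z. ?f k)"
    using binomial_ring[of "-2 :: int" 1 z] by (simp add: power_mult_distrib[symmetric] mult_ac)
  also have "\<dots> = (\<Sum>k\<le>t + z. ?f k)"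
    by (rule sum.mono_neutral_left) auto
  also have "\<dots> = (\<Sum>k\<le>t. ?f k) + (\<Sum>k = Suc t..t + z. ?f k)"
    by (rule sum_up_index_split)
  finally have "(-1::int) ^ z - (\<Sum>k\<le>t. ?f k) = (\<Sum>k = Suc t..t + z. ?f k)" by simp
  moreover have "2 ^ Suc t dvd (\<Sum>k = Suc t..t + z. ?f k)"
  proof (rule dvd_sum)
    fix k assume "k \<in> {Suc t..t + z}"
    then have "(2::int) ^ Suc t dvd 2 ^ k" by (intro le_imp_power_dvd) simp
    then show "2 ^ Suc t dvd ?f k" by (metis dvd_mult dvd_mult2)
  qed
  ultimately show ?thesis by simp
qed

lemma chi_eq_neg_one_power: "finite X \<Longrightarrow> chi X r = (-1) ^ agree X (\<lambda>_. True) r"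
  unfolding chi_def agree_def by (simp add: prod_sign_eq_power)

theorem binary_OA_fourier_coeff_dvd:
  assumes oa: "binary_OA n M \<tau> A" "\<tau> \<le> n" and "2 ^ Suc \<tau> dvd M" and X: "X \<subseteq> {..<n}"
  shows "2 ^ Suc \<tau> dvd fourier_coeff A X"
proof -
  have "finite X" using X finite_subset by blast
  have "2 ^ Suc \<tau> dvd (\<Sum>r\<in>#A. (-1) ^ agree X (\<lambda>_. True) r)
          - int M * (\<Sum>k\<le>\<tau>. (-1) ^ k * int (card X choose k))"
    by (rule binary_OA_moment_congruence[OF oa X]) (rule neg_one_power_binomial_congruence)
  moreover have "(2::int) ^ Suc \<tau> dvd int M * (\<Sum>k\<le>\<tau>. (-1) ^ k * int (card X choose k))"
    using \<open>2 ^ Suc \<tau> dvd M\<close> by (metis dvd_mult2 of_nat_dvd_iff of_nat_numeral of_nat_power)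
  ultimately show ?thesis
    unfolding fourier_coeff_def using chi_eq_neg_one_power[OF \<open>finite X\<close>]
    by (metis (no_types, lifting) dvd_add_left_iff diff_add_cancel image_mset_cong)
qed


lemma chi_remove:
  assumes "finite X" "l \<in> X"
  shows "chi (X - {l}) r = (if r ! l then -1 else 1) * chi X r"
  using prod.remove[OF assms, of "\<lambda>i. if r ! i then -1 else 1 :: int"]
  unfolding chi_def by auto

lemma chi_add_sum_chi_remove:
  fixes r :: "bool list"
  assumes "finite Y"
  defines "a \<equiv> agree Y (\<lambda>_. True) r"
  shows "chi Y r + (\<Sum>l\<in>Y. chi (Y - {l}) r) = (-1) ^ a * (1 + int (card Y) - 2 * int a)"
proof -
  have "(\<Sum>l\<in>Y. chi (Y - {l}) r) = (\<Sum>l\<in>Y. if r ! l then -1 else 1) * chi Y r"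
    using chi_remove[OF assms(1)] by (simp add: sum_distrib_right)
  also have "\<dots> = (int (card Y) - 2 * int a) * chi Y r"
    unfolding a_def agree_def using assms(1) by (simp add: sum_sign_eq)
  finally show ?thesis
    unfolding a_def using chi_eq_neg_one_power[OF assms(1)] by (simp add: algebra_simps)
qed

lemma chi_mult_chi: "finite X \<Longrightarrow> chi X x * chi X y = (-1) ^ hamming X x y"
  unfolding chi_def hamming_def agree_def
  by (simp add: prod.distrib[symmetric] prod_sign_eq_power[symmetric] if_distrib) (rule prod.cong; auto)

lemma chi_mult_chi_remove:
  assumes "finite X" "j \<in> X"
  shows "chi (X - {j}) x * chi (X - {j}) y
    = (if y ! j = (\<not> x ! j) then -1 else 1) * (chi X x * chi X y)"
  using chi_remove[OF assms, of x] chi_remove[OF assms, of y] by auto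

lemma sum_sign_eq_hamming:
  "finite U \<Longrightarrow> (\<Sum>j\<in>U. if y ! j = (\<not> x ! j) then -1 else 1 :: int)
    = int (card U) - 2 * int (hamming U x y)"
  unfolding hamming_def agree_def by (rule sum_sign_eq)

lemma chi_pair_sum_remove_one:
  assumes U: "finite U"
  shows "(\<Sum>j\<in>U. chi (U - {j}) x * chi (U - {j}) y)
    = (-1) ^ hamming U x y * (int (card U) - 2 * int (hamming U x y))"
proof -
  have "(\<Sum>j\<in>U. chi (U - {j}) x * chi (U - {j}) y)
      = (\<Sum>j\<in>U. if y ! j = (\<not> x ! j) then -1 else 1) * (chi U x * chi U y)"
    using chi_mult_chi_remove[OF U] by (simp add: sum_distrib_right)
  then show ?thesis
    using sum_sign_eq_hamming[OF U] chi_mult_chi[OF U] by (simp add: mult.commute)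
qed

lemma chi_pair_sum_remove_two:
  fixes x y :: "bool list"
  assumes U: "finite U"
  defines "d \<equiv> hamming U x y"
  shows "(\<Sum>j\<in>U. \<Sum>l\<in>U - {j}. chi (U - {j} - {l}) x * chi (U - {j} - {l}) y)
    = (-1) ^ d * ((int (card U) - 2 * int d)\<^sup>2 - int (card U))"
proof -
  define e where "e j = (if y ! j = (\<not> x ! j) then -1 else 1 :: int)" for j
  define E where "E = (\<Sum>j\<in>U. e j)"
  have e_sq: "e j * e j = 1" for j unfolding e_def by simp
  have inner: "(\<Sum>l\<in>U - {j}. chi (U - {j} - {l}) x * chi (U - {j} - {l}) y)
      = (-1) ^ d * e j * (E - e j)" if "j \<in> U" for j
  proof -
    have "(\<Sum>l\<in>U - {j}. chi (U - {j} - {l}) x * chi (U - {j} - {l}) y)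
        = (\<Sum>l\<in>U - {j}. e l * (e j * (-1) ^ d))"
      using chi_mult_chi_remove[of "U - {j}"] chi_mult_chi_remove[OF U that] chi_mult_chi[OF U] U
      unfolding e_def d_def by (intro sum.cong) auto
    also have "\<dots> = (-1) ^ d * e j * (\<Sum>l\<in>U - {j}. e l)"
      by (simp add: sum_distrib_left mult_ac)
    also have "\<dots> = (-1) ^ d * e j * (E - e j)"
      unfolding E_def using sum.remove[OF U that, of e] by simp
    finally show ?thesis .
  qed
  have "(\<Sum>j\<in>U. \<Sum>l\<in>U - {j}. chi (U - {j} - {l}) x * chi (U - {j} - {l}) y)
      = (\<Sum>j\<in>U. (-1) ^ d * e j * (E - e j))"
    using inner by (rule sum.cong[OF refl])
  also have "\<dots> = (-1) ^ d * ((\<Sum>j\<in>U. e j) * E - (\<Sum>j\<in>U. e j * e j))"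
    by (simp add: sum_distrib_left sum_distrib_right sum_subtractf algebra_simps)
  also have "\<dots> = (-1) ^ d * (E * E - int (card U))"
    using e_sq unfolding E_def by simp
  also have "\<dots> = (-1) ^ d * ((int (card U) - 2 * int d)\<^sup>2 - int (card U))"
    using sum_sign_eq_hamming[OF U, of y x] unfolding E_def e_def d_def
    by (simp add: power2_eq_square)
  finally show ?thesis .
qed

lemma fourier_coeff_square:
  "(fourier_coeff A X)\<^sup>2 = (\<Sum>x\<in>#A. \<Sum>y\<in>#A. chi X x * chi X y)"
  unfolding fourier_coeff_def power2_eq_square
  by (simp add: sum_mset_distrib_left sum_mset_distrib_right mult.commute)

lemma fourier_coeff_energy_eq:
  assumes U: "finite U"
  defines "m \<equiv> int (card U)"
  shows "2 * (\<Sum>j\<in>U. (fourier_coeff A (U - {j}))\<^sup>2)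
      + (\<Sum>j\<in>U. \<Sum>l\<in>U - {j}. (fourier_coeff A (U - {j} - {l}))\<^sup>2)
    = (\<Sum>x\<in>#A. \<Sum>y\<in>#A. (-1) ^ hamming U x y
        * (2 * (m - 2 * int (hamming U x y)) + (m - 2 * int (hamming U x y))\<^sup>2 - m))"
proof -
  have "2 * (\<Sum>j\<in>U. (fourier_coeff A (U - {j}))\<^sup>2)
        + (\<Sum>j\<in>U. \<Sum>l\<in>U - {j}. (fourier_coeff A (U - {j} - {l}))\<^sup>2)
      = (\<Sum>x\<in>#A. \<Sum>y\<in>#A. 2 * (\<Sum>j\<in>U. chi (U - {j}) x * chi (U - {j}) y)
          + (\<Sum>j\<in>U. \<Sum>l\<in>U - {j}. chi (U - {j} - {l}) x * chi (U - {j} - {l}) y))"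
    unfolding fourier_coeff_square
    by (simp add: sum_mset_sum_swap sum_mset.distrib sum_mset_distrib_left sum_distrib_left)
  then show ?thesis
    unfolding m_def chi_pair_sum_remove_one[OF U] chi_pair_sum_remove_two[OF U]
    by (simp add: algebra_simps)
qed


section \<open>The parameters (9, 96, 4)\<close>

lemma OA_9_96_4_fourier_coeff_not_all_zero:
  assumes oa: "binary_OA 9 96 4 A" and Y: "Y \<subseteq> {..<9}" "card Y = 8"
  shows "fourier_coeff A Y \<noteq> 0 \<or> (\<exists>l\<in>Y. fourier_coeff A (Y - {l}) \<noteq> 0)"
proof -
  have "finite Y" using Y(1) finite_subset by blast
  have "fourier_coeff A Y + (\<Sum>l\<in>Y. fourier_coeff A (Y - {l}))
      = (\<Sum>r\<in>#A. chi Y r + (\<Sum>l\<in>Y. chi (Y - {l}) r))"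
    unfolding fourier_coeff_def by (simp add: sum_mset_sum_swap sum_mset.distrib)
  also have "\<dots> = (\<Sum>r\<in>#A. (-1) ^ agree Y (\<lambda>_. True) r * (9 - 2 * int (agree Y (\<lambda>_. True) r)))"
    using chi_add_sum_chi_remove[OF \<open>finite Y\<close>] Y(2) by simp
  finally have sum_eq: "fourier_coeff A Y + (\<Sum>l\<in>Y. fourier_coeff A (Y - {l})) = \<dots>" .
  have "64 dvd (\<Sum>r\<in>#A. (-1) ^ agree Y (\<lambda>_. True) r * (9 - 2 * int (agree Y (\<lambda>_. True) r)))
      - int 96 * (\<Sum>k\<le>4. (9 - int k) * (-1) ^ k * int (card Y choose k))"
  proof (rule binary_OA_moment_congruence[OF oa _ Y(1)])
    \<comment> \<open>\<open>(-1)^z (9 - 2z) = \<Sum>\<^sub>k (9 - k) (-2)^k C(z, k)\<close>; the terms with \<open>k \<ge> 5\<close> are multiples of 64.\<close>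
    have "list_all (\<lambda>z. (64::int) dvd (-1) ^ z * (9 - 2 * int z)
        - (\<Sum>k\<le>4. (9 - int k) * (-1) ^ k * 2 ^ k * int (z choose k))) [0..<9]"
      by code_simp
    then show "64 dvd (-1) ^ z * (9 - 2 * int z)
        - (\<Sum>k\<le>4. (9 - int k) * (-1) ^ k * 2 ^ k * int (z choose k))" if "z \<le> card Y" for z
      using that Y(2) by (simp add: list_all_iff)
  qed simp
  moreover have "int 96 * (\<Sum>k\<le>4. (9 - int k) * (-1) ^ k * int (card Y choose k)) = 14880"
    unfolding Y(2) by code_simp
  ultimately have "64 dvd fourier_coeff A Y + (\<Sum>l\<in>Y. fourier_coeff A (Y - {l})) - 14880"
    by (simp only: sum_eq)
  then show ?thesis
  proof (rule contrapos_pp)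
    assume "\<not> ?thesis"
    then have "fourier_coeff A Y + (\<Sum>l\<in>Y. fourier_coeff A (Y - {l})) = 0" by simp
    then show "\<not> 64 dvd fourier_coeff A Y + (\<Sum>l\<in>Y. fourier_coeff A (Y - {l})) - 14880" by simp
  qed
qed

text \<open>A degree-4 majorant, in the binomial basis of the Hamming distance \<open>d\<close>, of the pair
  kernel of \<open>fourier_coeff_energy_eq\<close> for length 9, as in Delsarte's linear-programming method;
  the bound is tight except at \<open>d = 1\<close> and \<open>d = 9\<close>. Over pairs of rows, the term \<open>4 (-1)^d\<close> sums
  to \<open>4 F(U)\<^sup>2 \<ge> 0\<close> and the diagonal term to at least \<open>512 \<cdot> 96\<close>.\<close>

definition delsarte_poly :: "nat \<Rightarrow> int" where
  "delsarte_poly d = (\<Sum>k\<le>4. [606, -204, 60, -14, 2] ! k * 2 ^ k * int (d choose k))"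

lemma delsarte_poly_bound:
  assumes "d \<le> 9"
  shows "(-1) ^ d * (2 * (9 - 2 * int d) + (9 - 2 * int d)\<^sup>2 - 9)
    \<le> delsarte_poly d - 4 * (-1) ^ d - 512 * (if d = 0 then 1 else 0)"
proof -
  have "list_all (\<lambda>d. (-1::int) ^ d * (2 * (9 - 2 * int d) + (9 - 2 * int d)\<^sup>2 - 9)
      \<le> delsarte_poly d - 4 * (-1) ^ d - 512 * (if d = 0 then 1 else 0)) [0..<10]"
    unfolding delsarte_poly_def by code_simp
  then show ?thesis using assms by (simp add: list_all_iff)
qed

lemma OA_9_96_4_sum_delsarte_poly:
  assumes oa: "binary_OA 9 96 4 A"
  shows "(\<Sum>y\<in>#A. delsarte_poly (hamming {..<9} x y)) = 576"
proof -
  have "(\<Sum>y\<in>#A. delsarte_poly (hamming {..<9} x y))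
      = int 96 * (\<Sum>k\<le>4. [606, -204, 60, -14, 2] ! k * int (card {..<9::nat} choose k))"
    unfolding delsarte_poly_def hamming_def
    by (rule binary_OA_moment_combination[OF oa]) simp_all
  also have "\<dots> = 576" by code_simp
  finally show ?thesis .
qed

lemma OA_9_96_4_energy_bound:
  assumes oa: "binary_OA 9 96 4 A"
  shows "2 * (\<Sum>j<9. (fourier_coeff A ({..<9} - {j}))\<^sup>2)
        + (\<Sum>j<9. \<Sum>l\<in>{..<9} - {j}. (fourier_coeff A ({..<9} - {j} - {l}))\<^sup>2) \<le> 6144"
proof -
  let ?U = "{..<9::nat}" and ?d = "hamming {..<9}"
  let ?diag = "\<lambda>x y. if ?d x y = 0 then 1 else 0 :: int"
  have size_A: "size A = 96" using oa unfolding binary_OA_def by simp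
  have d_le: "?d x y \<le> 9" for x y
    using agree_le_card[of ?U] unfolding hamming_def by simp
  have "2 * (\<Sum>j\<in>?U. (fourier_coeff A (?U - {j}))\<^sup>2)
        + (\<Sum>j\<in>?U. \<Sum>l\<in>?U - {j}. (fourier_coeff A (?U - {j} - {l}))\<^sup>2)
      = (\<Sum>x\<in>#A. \<Sum>y\<in>#A. (-1) ^ ?d x y
          * (2 * (9 - 2 * int (?d x y)) + (9 - 2 * int (?d x y))\<^sup>2 - 9))"
    using fourier_coeff_energy_eq[of ?U A] by simp
  also have "\<dots> \<le> (\<Sum>x\<in>#A. \<Sum>y\<in>#A. delsarte_poly (?d x y) - 4 * (-1) ^ ?d x y - 512 * ?diag x y)"
    by (intro sum_mset_mono delsarte_poly_bound d_le)
  also have "\<dots> = 96 * 576 - 4 * (fourier_coeff A ?U)\<^sup>2 - 512 * (\<Sum>x\<in>#A. \<Sum>y\<in>#A. ?diag x y)"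
    unfolding fourier_coeff_square
    by (simp add: sum_mset_diff sum_mset_distrib_left chi_mult_chi
        OA_9_96_4_sum_delsarte_poly[OF oa] size_A)
  also have "\<dots> \<le> 96 * 576 - 4 * 0 - 512 * 96"
  proof -
    have "1 \<le> (\<Sum>y\<in>#A. ?diag x y)" if "x \<in># A" for x
      using member_le_sum_mset[OF that, of "?diag x"]
      by (simp add: hamming_def agree_def)
    then have "(\<Sum>x\<in>#A. 1) \<le> (\<Sum>x\<in>#A. \<Sum>y\<in>#A. ?diag x y)"
      by (rule sum_mset_mono)
    then have "96 \<le> (\<Sum>x\<in>#A. \<Sum>y\<in>#A. ?diag x y)" using size_A by simp
    then show ?thesis using zero_le_power2[of "fourier_coeff A ?U"] by linarith
  qed
  finally show ?thesis by simp
qed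

lemma square_le_square_of_nonzero_multiple:
  assumes "(m::int) dvd u" "u \<noteq> 0"
  shows "m\<^sup>2 \<le> u\<^sup>2"
proof -
  obtain q where q: "u = m * q" "q \<noteq> 0" using assms by (auto elim: dvdE)
  then have "1 \<le> q\<^sup>2" using zero_less_power2[of q] by linarith
  then have "m\<^sup>2 * 1 \<le> m\<^sup>2 * q\<^sup>2" by (intro mult_left_mono) auto
  then show ?thesis using q(1) by (simp add: power_mult_distrib)
qed

lemma square_le_sum_squares_of_nonzero_multiple:
  fixes v :: int and w :: "'a \<Rightarrow> int"
  assumes L: "finite L" and "m dvd v" and "\<And>l. l \<in> L \<Longrightarrow> m dvd w l"
    and "v \<noteq> 0 \<or> (\<exists>l\<in>L. w l \<noteq> 0)"
  shows "m\<^sup>2 \<le> v\<^sup>2 + (\<Sum>l\<in>L. (w l)\<^sup>2)"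
  using assms(4)
proof
  assume "v \<noteq> 0"
  then show ?thesis
    using square_le_square_of_nonzero_multiple[OF \<open>m dvd v\<close>] sum_nonneg[of L "\<lambda>l. (w l)\<^sup>2"]
    by fastforce
next
  assume "\<exists>l\<in>L. w l \<noteq> 0"
  then obtain l where l: "l \<in> L" "w l \<noteq> 0" by blast
  have "m\<^sup>2 \<le> (w l)\<^sup>2"
    using square_le_square_of_nonzero_multiple assms(3) l by blast
  also have "\<dots> \<le> (\<Sum>l\<in>L. (w l)\<^sup>2)"
    using L l(1) by (intro member_le_sum) auto
  finally show ?thesis by (smt (verit) zero_le_power2)
qed

theorem theorem4p1:
  shows "\<not> (\<exists>A. binary_OA 9 96 4 A)"
proof
  assume "\<exists>A. binary_OA 9 96 4 A"
  then obtain A where oa: "binary_OA 9 96 4 A" ..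
  let ?F = "fourier_coeff A" and ?U = "{..<9::nat}"
  have dvd: "32 dvd ?F X" if "X \<subseteq> ?U" for X
    using binary_OA_fourier_coeff_dvd[OF oa _ _ that] by simp
  have "(32::int)\<^sup>2 \<le> 2 * (?F (?U - {j}))\<^sup>2 + (\<Sum>l\<in>?U - {j}. (?F (?U - {j} - {l}))\<^sup>2)"
    if "j \<in> ?U" for j
  proof -
    have "(32::int)\<^sup>2 \<le> (?F (?U - {j}))\<^sup>2 + (\<Sum>l\<in>?U - {j}. (?F (?U - {j} - {l}))\<^sup>2)"
      using that by (intro square_le_sum_squares_of_nonzero_multiple dvd
          OA_9_96_4_fourier_coeff_not_all_zero[OF oa]) auto
    then show ?thesis by (smt (verit) zero_le_power2)
  qed
  then have "(\<Sum>j\<in>?U. (32::int)\<^sup>2) \<le> (\<Sum>j\<in>?U. 2 * (?F (?U - {j}))\<^sup>2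
      + (\<Sum>l\<in>?U - {j}. (?F (?U - {j} - {l}))\<^sup>2))"
    by (rule sum_mono)
  also have "\<dots> \<le> 6144"
    using OA_9_96_4_energy_bound[OF oa] by (simp add: sum.distrib sum_distrib_left)
  finally show False by simp
qed

end
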